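(* Let $K\ge2$, $0<q<p$ with $p+(K-1)q=1$, and $\phi\in\Delta$. If $\theta$ is an MLE for $\phi$, then for any $i,j\in\{1,\dots,K\}$, $\phi_i\le\phi_j$ implies $\theta_i\le\theta_j$.
   Context: $\Delta=\{\theta\in\mathbb{R}^K:\theta_i\ge0,\sum_i\theta_i=1\}$. $\mathcal{M}(\theta)_y=q+(p-q)\theta_y$. $\theta\in\Delta$ is an MLE for $\phi$ if it minimizes $D_{KL}(\phi,\mathcal{M}(\theta))=\sum_i\phi_i\log(\phi_i/\mathcal{M}(\theta)_i)$ (convention $0\log(0/\cdot)=0$) over $\Delta$ (for an empirical histogram $\phi$ of observed outputs $y_1,\dots,y_N$ this is equivalent to maximizing the likelihood $\prod_u\mathcal{M}(\theta)_{y_u}$). *)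

theory Defs
  imports Complex_Main
begin

definition simplex :: "nat \<Rightarrow> (nat \<Rightarrow> real) set" where
  "simplex K = {\<theta>. (\<forall>i\<in>{1..K}. \<theta> i \<ge> 0) \<and> (\<Sum>i=1..K. \<theta> i) = 1}"

definition model :: "real \<Rightarrow> real \<Rightarrow> (nat \<Rightarrow> real) \<Rightarrow> nat \<Rightarrow> real" where
  "model p q \<theta> y = q + (p - q) * \<theta> y"

definition KL :: "nat \<Rightarrow> (nat \<Rightarrow> real) \<Rightarrow> (nat \<Rightarrow> real) \<Rightarrow> real" where
  "KL K \<phi> \<mu> = (\<Sum>i=1..K. if \<phi> i = 0 then 0 else \<phi> i * ln (\<phi> i / \<mu> i))"

definition is_MLE :: "nat \<Rightarrow> real \<Rightarrow> real \<Rightarrow> (nat \<Rightarrow> real) \<Rightarrow> (nat \<Rightarrow> real) \<Rightarrow> bool" where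
  "is_MLE K p q \<phi> \<theta> \<longleftrightarrow> \<theta> \<in> simplex K \<and>
     (\<forall>\<theta>'\<in>simplex K. KL K \<phi> (model p q \<theta>) \<le> KL K \<phi> (model p q \<theta>'))"

end

theory Submission
  imports Defs
begin

text \<open>Since the model probabilities are positive, minimising the KL divergence is the same as
  maximising the log-likelihood. If the MLE had \<open>\<theta> i > \<theta> j\<close> although \<open>\<phi> i \<le> \<phi> j\<close>, a move
  of mass between the two coordinates would increase the likelihood: for \<open>\<phi> i = 0\<close> shift all of
  \<open>\<theta> i\<close> to a coordinate of positive weight; for \<open>\<phi> i > 0\<close> replace \<open>\<theta> i\<close> and \<open>\<theta> j\<close> by their
  mean, which gains by strict concavity of \<open>ln\<close> and because the heavier weight \<open>\<phi> j\<close> sits on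
  the smaller value.\<close>

definition log_likelihood :: "nat \<Rightarrow> real \<Rightarrow> real \<Rightarrow> (nat \<Rightarrow> real) \<Rightarrow> (nat \<Rightarrow> real) \<Rightarrow> real" where
  "log_likelihood K p q \<phi> \<theta> = (\<Sum>i=1..K. \<phi> i * ln (model p q \<theta> i))"

lemma model_pos:
  assumes "0 < q" "q \<le> p" "\<theta> y \<ge> 0"
  shows "model p q \<theta> y > 0"
  using assms by (simp add: model_def add_pos_nonneg)

lemma simplex_nonneg: "\<theta> \<in> simplex K \<Longrightarrow> i \<in> {1..K} \<Longrightarrow> \<theta> i \<ge> 0"
  by (simp add: simplex_def)

lemma KL_eq_entropy_diff:
  assumes "\<And>i. i \<in> {1..K} \<Longrightarrow> \<phi> i \<ge> 0" "\<And>i. i \<in> {1..K} \<Longrightarrow> \<mu> i > 0"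
  shows "KL K \<phi> \<mu> = (\<Sum>i=1..K. \<phi> i * ln (\<phi> i)) - (\<Sum>i=1..K. \<phi> i * ln (\<mu> i))"
proof -
  have "(if \<phi> i = 0 then 0 else \<phi> i * ln (\<phi> i / \<mu> i)) = \<phi> i * ln (\<phi> i) - \<phi> i * ln (\<mu> i)"
    if "i \<in> {1..K}" for i
    using assms[OF that] by (auto simp: ln_div right_diff_distrib)
  then show ?thesis
    unfolding KL_def by (simp add: sum_subtractf[symmetric])
qed

lemma is_MLE_iff_max_log_likelihood:
  assumes "\<phi> \<in> simplex K" "0 < q" "q \<le> p"
  shows "is_MLE K p q \<phi> \<theta> \<longleftrightarrow> \<theta> \<in> simplex K \<and>
    (\<forall>\<theta>'\<in>simplex K. log_likelihood K p q \<phi> \<theta>' \<le> log_likelihood K p q \<phi> \<theta>)"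
proof -
  have "KL K \<phi> (model p q \<theta>') = (\<Sum>i=1..K. \<phi> i * ln (\<phi> i)) - log_likelihood K p q \<phi> \<theta>'"
    if "\<theta>' \<in> simplex K" for \<theta>'
    unfolding log_likelihood_def
    by (rule KL_eq_entropy_diff) (use assms that in \<open>auto simp: simplex_nonneg intro: model_pos\<close>)
  then show ?thesis
    unfolding is_MLE_def by auto
qed

lemma simplex_transfer:
  assumes "\<theta> \<in> simplex K" "u \<in> {1..K}" "v \<in> {1..K}" "u \<noteq> v"
    and "x \<ge> 0" "y \<ge> 0" "x + y = \<theta> u + \<theta> v"
  shows "\<theta>(u := x, v := y) \<in> simplex K"
proof -
  have split: "(\<Sum>k=1..K. f k) = f u + f v + (\<Sum>k\<in>{1..K} - {u, v}. f k)" for f :: "nat \<Rightarrow> real"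
    using assms(2-4) sum.subset_diff[of "{u, v}" "{1..K}" f] by simp
  have "(\<Sum>k\<in>{1..K} - {u, v}. (\<theta>(u := x, v := y)) k) = (\<Sum>k\<in>{1..K} - {u, v}. \<theta> k)"
    by (rule sum.cong) auto
  then have "(\<Sum>k=1..K. (\<theta>(u := x, v := y)) k) = (\<Sum>k=1..K. \<theta> k)"
    using split[of "\<theta>(u := x, v := y)"] split[of \<theta>] assms(4,7) by simp
  then show ?thesis
    using assms by (simp add: simplex_def)
qed

lemma log_likelihood_fun_upd_diff:
  assumes "u \<in> {1..K}" "v \<in> {1..K}" "u \<noteq> v"
  shows "log_likelihood K p q \<phi> (\<theta>(u := x, v := y)) - log_likelihood K p q \<phi> \<theta> =
    \<phi> u * (ln (q + (p - q) * x) - ln (model p q \<theta> u)) +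
    \<phi> v * (ln (q + (p - q) * y) - ln (model p q \<theta> v))"
proof -
  define d where "d k = \<phi> k * (ln (model p q (\<theta>(u := x, v := y)) k) - ln (model p q \<theta> k))" for k
  have "log_likelihood K p q \<phi> (\<theta>(u := x, v := y)) - log_likelihood K p q \<phi> \<theta> = (\<Sum>k=1..K. d k)"
    by (simp add: log_likelihood_def d_def sum_subtractf[symmetric] right_diff_distrib)
  also have "\<dots> = (\<Sum>k\<in>{u, v}. d k)"
    using assms by (intro sum.mono_neutral_right) (auto simp: d_def model_def)
  also have "\<dots> = d u + d v"
    using assms(3) by simp
  finally show ?thesis
    using assms(3) by (simp add: d_def model_def)
qed

lemma MLE_two_coordinate_optimal:
  assumes "\<phi> \<in> simplex K" "0 < q" "q \<le> p" "is_MLE K p q \<phi> \<theta>"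
    and "u \<in> {1..K}" "v \<in> {1..K}" "u \<noteq> v"
    and "x \<ge> 0" "y \<ge> 0" "x + y = \<theta> u + \<theta> v"
  shows "\<phi> u * ln (q + (p - q) * x) + \<phi> v * ln (q + (p - q) * y) \<le>
    \<phi> u * ln (model p q \<theta> u) + \<phi> v * ln (model p q \<theta> v)"
proof -
  have "\<theta> \<in> simplex K"
    and max: "\<And>\<theta>'. \<theta>' \<in> simplex K \<Longrightarrow> log_likelihood K p q \<phi> \<theta>' \<le> log_likelihood K p q \<phi> \<theta>"
    using assms(4) is_MLE_iff_max_log_likelihood[OF assms(1-3)] by auto
  then have "log_likelihood K p q \<phi> (\<theta>(u := x, v := y)) \<le> log_likelihood K p q \<phi> \<theta>"
    using assms(5-10) by (intro max simplex_transfer) auto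
  then show ?thesis
    using log_likelihood_fun_upd_diff[OF assms(5-7), of p q \<phi> \<theta> x y]
    by (simp add: algebra_simps)
qed

lemma MLE_vanishes_off_support:
  assumes "\<phi> \<in> simplex K" "0 < q" "q < p" "is_MLE K p q \<phi> \<theta>"
    and "u \<in> {1..K}" "\<phi> u = 0"
  shows "\<theta> u = 0"
proof -
  have "\<exists>v\<in>{1..K}. \<phi> v > 0"
  proof (rule ccontr)
    assume "\<not> (\<exists>v\<in>{1..K}. \<phi> v > 0)"
    then have "\<phi> k = 0" if "k \<in> {1..K}" for k
      using simplex_nonneg[OF assms(1) that] that by force
    then have "(\<Sum>k=1..K. \<phi> k) = 0"
      by simp
    with assms(1) show False
      by (simp add: simplex_def)
  qed
  then obtain v where v: "v \<in> {1..K}" "\<phi> v > 0"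
    by blast
  have "u \<noteq> v"
    using assms(6) v(2) by auto
  have \<theta>: "\<theta> \<in> simplex K"
    using assms(4) by (simp add: is_MLE_def)
  have \<theta>u: "\<theta> u \<ge> 0" and \<theta>v: "\<theta> v \<ge> 0"
    using simplex_nonneg[OF \<theta>] assms(5) v(1) by auto
  have "\<phi> u * ln (q + (p - q) * 0) + \<phi> v * ln (q + (p - q) * (\<theta> u + \<theta> v)) \<le>
      \<phi> u * ln (model p q \<theta> u) + \<phi> v * ln (model p q \<theta> v)"
    using \<theta>u \<theta>v assms(3)
    by (intro MLE_two_coordinate_optimal[OF assms(1,2) _ assms(4,5) v(1) \<open>u \<noteq> v\<close>]) auto
  then have "ln (q + (p - q) * (\<theta> u + \<theta> v)) \<le> ln (q + (p - q) * \<theta> v)"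
    using assms(6) v(2) by (simp add: model_def)
  moreover have "0 < q + (p - q) * \<theta> v"
    using assms(2,3) \<theta>v by (simp add: add_pos_nonneg)
  moreover have "0 < q + (p - q) * (\<theta> u + \<theta> v)"
    using assms(2,3) \<theta>u \<theta>v by (simp add: add_pos_nonneg)
  ultimately have "(p - q) * \<theta> u \<le> 0"
    by (simp add: algebra_simps)
  then show ?thesis
    using assms(3) \<theta>u by (simp add: mult_le_0_iff)
qed

lemma weighted_ln_lt_ln_midpoint:
  fixes a b f g :: real
  assumes "0 < b" "b < a" "0 < f" "f \<le> g"
  shows "f * ln a + g * ln b < (f + g) * ln ((a + b) / 2)"
proof -
  let ?c = "(a + b) / 2"
  have "?c\<^sup>2 - a * b = ((a - b) / 2)\<^sup>2"
    by (simp add: power2_eq_square field_simps)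
  moreover have "((a - b) / 2)\<^sup>2 > 0"
    using assms(2) by simp
  ultimately have "a * b < ?c\<^sup>2"
    by linarith
  have "ln a + ln b = ln (a * b)"
    using assms(1,2) by (simp add: ln_mult)
  also have "\<dots> < ln (?c\<^sup>2)"
    using \<open>a * b < ?c\<^sup>2\<close> assms(1,2) by simp
  also have "\<dots> = 2 * ln ?c"
    using assms(1,2) by (simp add: ln_realpow)
  finally have "ln a + ln b < 2 * ln ?c" .
  moreover have "ln b < ln ?c"
    using assms(1,2) by simp
  ultimately have "f * (ln a + ln b) + (g - f) * ln b < f * (2 * ln ?c) + (g - f) * ln ?c"
    using assms(3,4) by (intro add_less_le_mono mult_strict_left_mono mult_left_mono) auto
  then show ?thesis
    by (simp add: algebra_simps)
qed

lemma MLE_monotone_on_support: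
  assumes "\<phi> \<in> simplex K" "0 < q" "q < p" "is_MLE K p q \<phi> \<theta>"
    and "i \<in> {1..K}" "j \<in> {1..K}" "0 < \<phi> i" "\<phi> i \<le> \<phi> j"
  shows "\<theta> i \<le> \<theta> j"
proof (rule ccontr)
  assume "\<not> \<theta> i \<le> \<theta> j"
  then have "\<theta> j < \<theta> i" and "i \<noteq> j"
    by auto
  have \<theta>: "\<theta> \<in> simplex K"
    using assms(4) by (simp add: is_MLE_def)
  define m where "m = (\<theta> i + \<theta> j) / 2"
  have mid: "q + (p - q) * m = (model p q \<theta> i + model p q \<theta> j) / 2"
    by (simp add: m_def model_def field_simps)
  have "\<phi> i * ln (q + (p - q) * m) + \<phi> j * ln (q + (p - q) * m) \<le>
      \<phi> i * ln (model p q \<theta> i) + \<phi> j * ln (model p q \<theta> j)"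
    using assms(3) simplex_nonneg[OF \<theta>] assms(5,6)
    by (intro MLE_two_coordinate_optimal[OF assms(1,2) _ assms(4-6) \<open>i \<noteq> j\<close>]) (auto simp: m_def)
  then have "(\<phi> i + \<phi> j) * ln ((model p q \<theta> i + model p q \<theta> j) / 2) \<le>
      \<phi> i * ln (model p q \<theta> i) + \<phi> j * ln (model p q \<theta> j)"
    unfolding mid by (simp add: distrib_right)
  moreover have "\<phi> i * ln (model p q \<theta> i) + \<phi> j * ln (model p q \<theta> j) <
      (\<phi> i + \<phi> j) * ln ((model p q \<theta> i + model p q \<theta> j) / 2)"
    using \<open>\<theta> j < \<theta> i\<close> assms(2,3,7,8) simplex_nonneg[OF \<theta> assms(6)]
    by (intro weighted_ln_lt_ln_midpoint) (auto simp: model_def add_pos_nonneg)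
  ultimately show False
    by linarith
qed

theorem theorem6:
  fixes K :: nat and p q :: real and \<phi> \<theta> :: "nat \<Rightarrow> real" and i j :: nat
  assumes "K \<ge> 2"
    and "0 < q" and "q < p" and "p + (real K - 1) * q = 1"
    and "\<phi> \<in> simplex K"
    and "is_MLE K p q \<phi> \<theta>"
    and "i \<in> {1..K}" and "j \<in> {1..K}"
    and "\<phi> i \<le> \<phi> j"
  shows "\<theta> i \<le> \<theta> j"
proof -
  have \<theta>: "\<theta> \<in> simplex K"
    using assms(6) by (simp add: is_MLE_def)
  consider "\<phi> i = 0" | "\<phi> i > 0"
    using simplex_nonneg[OF assms(5,7)] by linarith
  then show ?thesis
  proof cases
    case 1
    then show ?thesis
      using MLE_vanishes_off_support[OF assms(5,2,3,6,7)] simplex_nonneg[OF \<theta> assms(8)] by simp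
  next
    case 2
    then show ?thesis
      using MLE_monotone_on_support[OF assms(5,2,3,6-8) _ assms(9)] by simp
  qed
qed

end
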